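(* Let $G=(V,E)$ be a directed graph with a partition of $V$ into disjoint regions $R_1,\dots,R_k$, let $f\in\mathbb{N}$, $\ell=2f+1$, $V'=V\times[\ell]$, $v_i=(v,i)$, $P(v_i)=v$, and $E'=\bigcup_{e\in E}E'_e$ where for $e=(v,w)\in E$, $E'_e=\{(v_i,w_i): i\in[\ell]\}$ if $v,w$ lie in the same region and $E'_e=\{(v_i,w_j): i,j\in[\ell]\}$ otherwise. For $v'\in V'$ and $(w,P(v'))\in E$ let $N_{v'}(w)=\{w'\in V': P(w')=w,\ (w',v')\in E'\}$. Let $A$ be a scheduling algorithm on $G$ and $A'$ the algorithm in which each non-faulty $v'\in V'$: (1) initializes local copies of the state variables of $P(v')$ as in $A$; (2) in each round sends on each link $(v',w')\in E'$ the message $P(v')$ would send on $(P(v'),P(w'))$ under $A$ according to its local state; (3) updates its state in each round as if $P(v')$ received, for each $(w,P(v'))\in E$, the message sent by the majority of the nodes in $N_{v'}(w)$. Let $F'\subseteq V'$ be a set of Byzantine nodes such that for each $k'\in[k]$ there are at least $f+1$ indices $i\in[\ell]$ with $\{v_i:v\in R_{k'}\}\cap F'=\emptyset$. Then $A'$ simulates $A$: assuming each non-faulty $v'$ receives the same environment input as $P(v')$, for each $v\in V$ a strict majority of its copies $v_1,\dots,v_\ell$ compute in every round the state of $v$ in the fault-free execution of $A$ on $G$.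
   Context: Networks are synchronous directed graphs running a scheduling algorithm (each round: send messages on outgoing links based on state, then update state from received messages and environment input). Byzantine faulty nodes may behave arbitrarily. $[\ell]=\{1,\dots,\ell\}$. *)

theory Defs
  imports Main
begin

text \<open>A synchronous scheduling algorithm on a directed graph (V,E) is given by
  an initial state per node, a message function (node, round, own state, receiver)
  and a state-update function (node, round, own state, received messages indexed by
  the in-neighbour they arrive from (None for non-neighbours), environment input).\<close>

definition same_region :: "(nat \<Rightarrow> 'v set) \<Rightarrow> nat \<Rightarrow> 'v \<Rightarrow> 'v \<Rightarrow> bool" where
  "same_region R k v w \<longleftrightarrow> (\<exists>k'\<in>{1..k}. v \<in> R k' \<and> w \<in> R k')"

definition Eprime :: "('v \<times> 'v) set \<Rightarrow> (nat \<Rightarrow> 'v set) \<Rightarrow> nat \<Rightarrow> nat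
    \<Rightarrow> (('v \<times> nat) \<times> ('v \<times> nat)) set" where
  "Eprime E R k l = (\<Union>e\<in>E.
      if same_region R k (fst e) (snd e)
      then {((fst e, i), (snd e, i)) | i. i \<in> {1..l}}
      else {((fst e, i), (snd e, j)) | i j. i \<in> {1..l} \<and> j \<in> {1..l}})"

definition Nb :: "'v set \<Rightarrow> ('v \<times> 'v) set \<Rightarrow> (nat \<Rightarrow> 'v set) \<Rightarrow> nat \<Rightarrow> nat
    \<Rightarrow> ('v \<times> nat) \<Rightarrow> 'v \<Rightarrow> ('v \<times> nat) set" where
  "Nb V E R k l v' w = {w' \<in> V \<times> {1..l}. fst w' = w \<and> (w', v') \<in> Eprime E R k l}"

definition maj :: "'a set \<Rightarrow> ('a \<Rightarrow> 'm) \<Rightarrow> 'm \<Rightarrow> 'm" where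
  "maj S g d = (if \<exists>m. 2 * card {x \<in> S. g x = m} > card S
                then (THE m. 2 * card {x \<in> S. g x = m} > card S) else d)"

text \<open>Fault-free execution of A on G: state of node v at (the beginning of) round r.\<close>
primrec exec_A :: "('v \<times> 'v) set \<Rightarrow> ('v \<Rightarrow> 's) \<Rightarrow> ('v \<Rightarrow> nat \<Rightarrow> 's \<Rightarrow> 'v \<Rightarrow> 'm)
    \<Rightarrow> ('v \<Rightarrow> nat \<Rightarrow> 's \<Rightarrow> ('v \<Rightarrow> 'm option) \<Rightarrow> 'e \<Rightarrow> 's) \<Rightarrow> (nat \<Rightarrow> 'v \<Rightarrow> 'e)
    \<Rightarrow> nat \<Rightarrow> 'v \<Rightarrow> 's" where
  "exec_A E init send upd env 0 = init"
| "exec_A E init send upd env (Suc r) =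
     (\<lambda>v. upd v r (exec_A E init send upd env r v)
            (\<lambda>w. if (w, v) \<in> E then Some (send w r (exec_A E init send upd env r w) v) else None)
            (env r v))"

text \<open>Faulty nodes send arbitrary messages byz r w' v' (in round r on link (w',v'));
  their local states are irrelevant. dflt r v' w is the (arbitrary) value used when the
  messages from N_{v'}(w) have no strict majority.\<close>
primrec exec_A' :: "'v set \<Rightarrow> ('v \<times> 'v) set \<Rightarrow> (nat \<Rightarrow> 'v set) \<Rightarrow> nat \<Rightarrow> nat
    \<Rightarrow> ('v \<Rightarrow> 's) \<Rightarrow> ('v \<Rightarrow> nat \<Rightarrow> 's \<Rightarrow> 'v \<Rightarrow> 'm)
    \<Rightarrow> ('v \<Rightarrow> nat \<Rightarrow> 's \<Rightarrow> ('v \<Rightarrow> 'm option) \<Rightarrow> 'e \<Rightarrow> 's) \<Rightarrow> (nat \<Rightarrow> 'v \<Rightarrow> 'e)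
    \<Rightarrow> ('v \<times> nat) set \<Rightarrow> (nat \<Rightarrow> 'v \<times> nat \<Rightarrow> 'v \<times> nat \<Rightarrow> 'm)
    \<Rightarrow> (nat \<Rightarrow> 'v \<times> nat \<Rightarrow> 'v \<Rightarrow> 'm)
    \<Rightarrow> nat \<Rightarrow> 'v \<times> nat \<Rightarrow> 's" where
  "exec_A' V E R k l init send upd env F byz dflt 0 = (\<lambda>v'. init (fst v'))"
| "exec_A' V E R k l init send upd env F byz dflt (Suc r) =
     (\<lambda>v'. upd (fst v') r (exec_A' V E R k l init send upd env F byz dflt r v')
        (\<lambda>w. if (w, fst v') \<in> E
             then Some (maj (Nb V E R k l v' w)
                  (\<lambda>w'. if w' \<in> F then byz r w' v'
                        else send (fst w') r (exec_A' V E R k l init send upd env F byz dflt r w') (fst v'))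
                  (dflt r v' w))
             else None)
        (env r (fst v')))"

end

theory Submission
  imports Defs
begin

text \<open>Call a copy index \<open>i\<close> clean for a region if no copy \<open>(v, i)\<close> of a node of that region
  is faulty; by hypothesis a strict majority of the indices is clean for every region. By
  induction on the round, clean copies compute the fault-free state: a clean copy \<open>(v, i)\<close> takes
  the message of an in-neighbour \<open>w\<close> either from the single copy \<open>(w, i)\<close>, which is clean because
  \<open>w\<close> lies in the region of \<open>v\<close>, or as the majority over all copies of \<open>w\<close>, among which the
  copies clean for the region of \<open>w\<close> form a strict majority sending the fault-free message.\<close>

lemma strict_majorities_coincide:
  assumes "finite S"
    and "card S < 2 * card {x \<in> S. g x = m}" and "card S < 2 * card {x \<in> S. g x = m'}"
  shows "m' = m"
proof (rule ccontr)
  assume "m' \<noteq> m"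
  then have "card {x \<in> S. g x = m'} + card {x \<in> S. g x = m}
      = card ({x \<in> S. g x = m'} \<union> {x \<in> S. g x = m})"
    using assms(1) by (intro card_Un_disjoint[symmetric]) auto
  also have "\<dots> \<le> card S"
    using assms(1) by (intro card_mono) auto
  finally show False using assms(2,3) by linarith
qed

lemma maj_eqI:
  assumes "finite S" "T \<subseteq> S" "\<forall>x\<in>T. g x = m" "card S < 2 * card T"
  shows "maj S g d = m"
proof -
  have "card T \<le> card {x \<in> S. g x = m}"
    using assms(1-3) by (intro card_mono) auto
  then have majority: "card S < 2 * card {x \<in> S. g x = m}"
    using assms(4) by linarith
  then have "(THE m. card S < 2 * card {x \<in> S. g x = m}) = m"
    using strict_majorities_coincide[OF assms(1) majority] by (rule the_equality)
  with majority show ?thesis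
    unfolding maj_def by auto
qed

lemma Eprime_iff:
  "((w, j), (v, i)) \<in> Eprime E R k l \<longleftrightarrow>
     (w, v) \<in> E \<and> i \<in> {1..l} \<and> j \<in> {1..l} \<and> (same_region R k w v \<longrightarrow> j = i)"
  unfolding Eprime_def by (cases "same_region R k w v") (force split: if_splits)+

lemma Nb_same_region:
  assumes "(w, v) \<in> E" "same_region R k w v" "w \<in> V" "i \<in> {1..l}"
  shows "Nb V E R k l (v, i) w = {(w, i)}"
  using assms unfolding Nb_def by (auto simp: Eprime_iff)

lemma Nb_other_region:
  assumes "(w, v) \<in> E" "\<not> same_region R k w v" "w \<in> V" "i \<in> {1..l}"
  shows "Nb V E R k l (v, i) w = {w} \<times> {1..l}"
  using assms unfolding Nb_def by (auto simp: Eprime_iff)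

definition clean_copies :: "nat \<Rightarrow> (nat \<Rightarrow> 'v set) \<Rightarrow> ('v \<times> nat) set \<Rightarrow> nat \<Rightarrow> nat set" where
  "clean_copies l R F k' = {i \<in> {1..l}. {(v, i) | v. v \<in> R k'} \<inter> F = {}}"

lemma clean_copies_subset: "clean_copies l R F k' \<subseteq> {1..l}"
  unfolding clean_copies_def by auto

lemma clean_copy_not_faulty: "i \<in> clean_copies l R F k' \<Longrightarrow> v \<in> R k' \<Longrightarrow> (v, i) \<notin> F"
  unfolding clean_copies_def by blast

locale region_partition =
  fixes V :: "'v set" and E :: "('v \<times> 'v) set" and R :: "nat \<Rightarrow> 'v set" and k :: nat
  assumes E_sub: "E \<subseteq> V \<times> V"
    and R_disj: "\<forall>i\<in>{1..k}. \<forall>j\<in>{1..k}. i \<noteq> j \<longrightarrow> R i \<inter> R j = {}"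
    and R_cover: "(\<Union>i\<in>{1..k}. R i) = V"
begin

lemma region_exists:
  assumes "v \<in> V"
  obtains k' where "k' \<in> {1..k}" "v \<in> R k'"
  using assms R_cover by auto

lemma region_unique:
  assumes "k1 \<in> {1..k}" "k2 \<in> {1..k}" "v \<in> R k1" "v \<in> R k2"
  shows "k1 = k2"
  using assms R_disj by blast

lemma same_region_iff:
  assumes "k' \<in> {1..k}" "v \<in> R k'"
  shows "same_region R k w v \<longleftrightarrow> w \<in> R k'"
  using assms region_unique unfolding same_region_def by blast

end

locale replicated_execution = region_partition V E R k
  for V :: "'v set" and E R k +
  fixes l :: nat
    and init :: "'v \<Rightarrow> 's" and send :: "'v \<Rightarrow> nat \<Rightarrow> 's \<Rightarrow> 'v \<Rightarrow> 'm"
    and upd :: "'v \<Rightarrow> nat \<Rightarrow> 's \<Rightarrow> ('v \<Rightarrow> 'm option) \<Rightarrow> 'e \<Rightarrow> 's"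
    and env :: "nat \<Rightarrow> 'v \<Rightarrow> 'e"
    and F :: "('v \<times> nat) set" and byz :: "nat \<Rightarrow> 'v \<times> nat \<Rightarrow> 'v \<times> nat \<Rightarrow> 'm"
    and dflt :: "nat \<Rightarrow> 'v \<times> nat \<Rightarrow> 'v \<Rightarrow> 'm"
  assumes clean_majority: "k' \<in> {1..k} \<Longrightarrow> l < 2 * card (clean_copies l R F k')"
begin

abbreviation "replicated_run \<equiv> exec_A' V E R k l init send upd env F byz dflt"
abbreviation "fault_free_run \<equiv> exec_A E init send upd env"

abbreviation "clean_copies_exact r \<equiv>
  \<forall>k'\<in>{1..k}. \<forall>v\<in>R k'. \<forall>i\<in>clean_copies l R F k'. replicated_run r (v, i) = fault_free_run r v"

lemma majority_message:
  assumes exact: "clean_copies_exact r"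
    and k': "k' \<in> {1..k}" and v: "v \<in> R k'" and i: "i \<in> clean_copies l R F k'"
    and wv: "(w, v) \<in> E"
  shows "maj (Nb V E R k l (v, i) w)
           (\<lambda>w'. if w' \<in> F then byz r w' (v, i) else send (fst w') r (replicated_run r w') v)
           (dflt r (v, i) w)
         = send w r (fault_free_run r w) v"
proof -
  have w: "w \<in> V" using wv E_sub by auto
  have i_range: "i \<in> {1..l}" using i clean_copies_subset by blast
  show ?thesis
  proof (cases "same_region R k w v")
    case True
    then have w_region: "w \<in> R k'" using same_region_iff[OF k' v] by simp
    have "replicated_run r (w, i) = fault_free_run r w" "(w, i) \<notin> F"
      using exact k' i w_region clean_copy_not_faulty[OF i w_region] by auto
    then show ?thesis
      by (intro maj_eqI[where T = "{(w, i)}"]) (use Nb_same_region[OF wv True w i_range] in auto)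
  next
    case False
    obtain kw where kw: "kw \<in> {1..k}" "w \<in> R kw" using region_exists[OF w] .
    note Nb = Nb_other_region[OF wv False w i_range]
    show ?thesis
    proof (rule maj_eqI[where T = "{w} \<times> clean_copies l R F kw"])
      show "finite (Nb V E R k l (v, i) w)" using Nb by simp
      show "{w} \<times> clean_copies l R F kw \<subseteq> Nb V E R k l (v, i) w"
        using Nb clean_copies_subset[of l R F kw] by auto
      show "card (Nb V E R k l (v, i) w) < 2 * card ({w} \<times> clean_copies l R F kw)"
        using Nb clean_majority[OF kw(1)] by (simp add: card_cartesian_product)
    qed (use exact kw clean_copy_not_faulty[of _ l R F kw w] in auto)
  qed
qed

lemma clean_copies_stay_exact:
  "clean_copies_exact r"
proof (induction r)
  case 0
  show ?case by simp
next
  case (Suc r)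
  show ?case
  proof (intro ballI)
    fix k' v i
    assume copy: "k' \<in> {1..k}" "v \<in> R k'" "i \<in> clean_copies l R F k'"
    then have "replicated_run r (v, i) = fault_free_run r v"
      using Suc.IH by blast
    moreover have "(\<lambda>w. if (w, v) \<in> E
          then Some (maj (Nb V E R k l (v, i) w)
                 (\<lambda>w'. if w' \<in> F then byz r w' (v, i) else send (fst w') r (replicated_run r w') v)
                 (dflt r (v, i) w))
          else None)
        = (\<lambda>w. if (w, v) \<in> E then Some (send w r (fault_free_run r w) v) else None)"
      using majority_message[OF Suc.IH copy] by auto
    ultimately show "replicated_run (Suc r) (v, i) = fault_free_run (Suc r) v"
      unfolding exec_A'.simps exec_A.simps fst_conv by simp
  qed
qed

theorem strict_majority_of_copies_simulate:
  assumes "v \<in> V"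
  shows "l < 2 * card {i \<in> {1..l}. (v, i) \<notin> F \<and> replicated_run r (v, i) = fault_free_run r v}"
proof -
  obtain k' where k': "k' \<in> {1..k}" "v \<in> R k'" using region_exists[OF assms] .
  have "clean_copies l R F k' \<subseteq> {i \<in> {1..l}. (v, i) \<notin> F \<and> replicated_run r (v, i) = fault_free_run r v}"
    using clean_copies_stay_exact k' clean_copies_subset[of l R F k'] clean_copy_not_faulty[of _ l R F k' v]
    by blast
  then have "card (clean_copies l R F k')
      \<le> card {i \<in> {1..l}. (v, i) \<notin> F \<and> replicated_run r (v, i) = fault_free_run r v}"
    by (intro card_mono) simp_all
  then show ?thesis using clean_majority[OF k'(1)] by linarith
qed

end

theorem lemma8:
  fixes V :: "'v set" and E :: "('v \<times> 'v) set" and R :: "nat \<Rightarrow> 'v set"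
    and k f l :: nat
    and init :: "'v \<Rightarrow> 's" and send :: "'v \<Rightarrow> nat \<Rightarrow> 's \<Rightarrow> 'v \<Rightarrow> 'm"
    and upd :: "'v \<Rightarrow> nat \<Rightarrow> 's \<Rightarrow> ('v \<Rightarrow> 'm option) \<Rightarrow> 'e \<Rightarrow> 's"
    and env :: "nat \<Rightarrow> 'v \<Rightarrow> 'e"
    and F :: "('v \<times> nat) set" and byz :: "nat \<Rightarrow> 'v \<times> nat \<Rightarrow> 'v \<times> nat \<Rightarrow> 'm"
    and dflt :: "nat \<Rightarrow> 'v \<times> nat \<Rightarrow> 'v \<Rightarrow> 'm"
  assumes E_sub: "E \<subseteq> V \<times> V"
    and R_disj: "\<forall>i\<in>{1..k}. \<forall>j\<in>{1..k}. i \<noteq> j \<longrightarrow> R i \<inter> R j = {}"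
    and R_cover: "(\<Union>i\<in>{1..k}. R i) = V"
    and l_def: "l = 2 * f + 1"
    and F_sub: "F \<subseteq> V \<times> {1..l}"
    and F_good: "\<forall>k'\<in>{1..k}. card {i \<in> {1..l}. {(v, i) | v. v \<in> R k'} \<inter> F = {}} \<ge> f + 1"
  shows "\<forall>v\<in>V. \<forall>r. 2 * card {i \<in> {1..l}. (v, i) \<notin> F \<and>
            exec_A' V E R k l init send upd env F byz dflt r (v, i) = exec_A E init send upd env r v} > l"
proof -
  have "l < 2 * card (clean_copies l R F k')" if "k' \<in> {1..k}" for k'
    using F_good that l_def unfolding clean_copies_def by force
  then interpret replicated_execution V E R k l init send upd env F byz dflt
    using E_sub R_disj R_cover by unfold_locales
  show ?thesis
    using strict_majority_of_copies_simulate by blast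
qed

end
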